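(* Let $n=em$ with $e,m\geq1$ integers, let $k$ be a positive integer, let $\alpha,\beta\in\mathbb{F}_{2^e}^*$ with $\beta=\alpha^2$, and let $c_i\in\mathbb{F}_2$ for $1\leq i\leq\lfloor\frac{m-1}{2}\rfloor$. Define $f_Q:\mathbb{F}_{2^n}\to\mathbb{F}_2$ by $$f_Q(x)=p(\alpha x)+\sum_{i=1}^{\lfloor\frac{m-1}{2}\rfloor}c_i\,\mathrm{tr}_1^n\big(\beta x^{1+2^{eki}}\big),$$ where $$p(x)=\begin{cases}\sum_{i=1}^{n/2-1}\mathrm{tr}_1^n\big(x^{1+2^i}\big)+\mathrm{tr}_1^{n/2}\big(x^{1+2^{n/2}}\big) & \text{if } n \text{ is even},\\ \sum_{i=1}^{(n-1)/2}\mathrm{tr}_1^n\big(x^{1+2^i}\big) & \text{if } n \text{ is odd}.\end{cases}$$ Then $f_Q$ is bent (if $n$ is even), respectively semi-bent (if $n$ is odd), if and only if $\gcd(c(x^k),x^m-1)=1$ in $\mathbb{F}_2[x]$, where $c(x)=1+\sum_{i=1}^{\lfloor\frac{m-1}{2}\rfloor}c_i(x^i+x^{m-i})$.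
   Context: $\mathbb{F}_{2^e}$ is regarded as a subfield of $\mathbb{F}_{2^n}$ (as $e\mid n$). $\mathrm{tr}_1^n(x)=\sum_{j=0}^{n-1}x^{2^j}$ is the absolute trace from $\mathbb{F}_{2^n}$ to $\mathbb{F}_2$, and for even $n$, $\mathrm{tr}_1^{n/2}(y)=\sum_{j=0}^{n/2-1}y^{2^j}$ for $y\in\mathbb{F}_{2^{n/2}}$ (note $x^{1+2^{n/2}}\in\mathbb{F}_{2^{n/2}}$). For $g:\mathbb{F}_{2^n}\to\mathbb{F}_2$, its Walsh transform is $\hat g(a)=\sum_{x\in\mathbb{F}_{2^n}}(-1)^{g(x)+\mathrm{tr}_1^n(ax)}$; $g$ is bent if $|\hat g(a)|=2^{n/2}$ for all $a\in\mathbb{F}_{2^n}$, and semi-bent if $|\hat g(a)|\in\{0,2^{\lfloor (n+2)/2\rfloor}\}$ for all $a\in\mathbb{F}_{2^n}$. *)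

theory Defs
  imports "HOL-Library.Z2" "HOL-Computational_Algebra.Polynomial"
begin

(* absolute-type trace sum_{j<r} x^(2^j); with r = n this is tr_1^n on F_{2^n},
   with r = n/2 applied to elements of F_{2^{n/2}} it is tr_1^{n/2} *)
definition tr :: "nat \<Rightarrow> 'a::field \<Rightarrow> 'a" where
  "tr r x = (\<Sum>j<r. x ^ (2 ^ j))"

definition sgn1 :: "'a::field \<Rightarrow> int" where
  "sgn1 y = (if y = 0 then 1 else -1)"

(* Walsh transform of a Boolean function g : F_{2^n} -> F_2 (values 0/1 in the field) *)
definition walsh :: "nat \<Rightarrow> ('a::{field,finite} \<Rightarrow> 'a) \<Rightarrow> 'a \<Rightarrow> int" where
  "walsh n g a = (\<Sum>x\<in>UNIV. sgn1 (g x + tr n (a * x)))"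

definition bent :: "nat \<Rightarrow> ('a::{field,finite} \<Rightarrow> 'a) \<Rightarrow> bool" where
  "bent n g \<longleftrightarrow> (\<forall>a. \<bar>walsh n g a\<bar> = 2 ^ (n div 2))"

definition semi_bent :: "nat \<Rightarrow> ('a::{field,finite} \<Rightarrow> 'a) \<Rightarrow> bool" where
  "semi_bent n g \<longleftrightarrow> (\<forall>a. \<bar>walsh n g a\<bar> \<in> {0, 2 ^ ((n + 2) div 2)})"

definition p_fun :: "nat \<Rightarrow> 'a::field \<Rightarrow> 'a" where
  "p_fun n x = (if even n
     then (\<Sum>i\<in>{1..<n div 2}. tr n (x ^ (1 + 2 ^ i))) + tr (n div 2) (x ^ (1 + 2 ^ (n div 2)))
     else (\<Sum>i\<in>{1..(n - 1) div 2}. tr n (x ^ (1 + 2 ^ i))))"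

definition fQ :: "nat \<Rightarrow> nat \<Rightarrow> nat \<Rightarrow> nat \<Rightarrow> 'a::field \<Rightarrow> 'a \<Rightarrow> (nat \<Rightarrow> bit) \<Rightarrow> 'a \<Rightarrow> 'a" where
  "fQ n e m k \<alpha> \<beta> c x = p_fun n (\<alpha> * x)
     + (\<Sum>i\<in>{1..(m - 1) div 2}. (if c i = 1 then 1 else 0) * tr n (\<beta> * x ^ (1 + 2 ^ (e * k * i))))"

definition c_poly :: "nat \<Rightarrow> (nat \<Rightarrow> bit) \<Rightarrow> bit poly" where
  "c_poly m c = 1 + (\<Sum>i\<in>{1..(m - 1) div 2}. smult (c i) (monom 1 i + monom 1 (m - i)))"

end

theory Submission
  imports Defs
begin

text \<open>
  Both \<open>p(\<alpha>x)\<close> and the terms \<open>tr(\<beta> x^(1+2^(eki)))\<close> are quadratic, so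
  \<open>f\<^sub>Q(x + z) = f\<^sub>Q(x) + f\<^sub>Q(z) + tr(x L(z))\<close> with the additive map
  \<open>L(z) = \<alpha> (tr(\<alpha>z) + G(\<alpha>z))\<close>, where \<open>G\<close> is the \<open>2^e\<close>-linearized polynomial
  associated with \<open>c(x^k)\<close>; products in \<open>F\<^sub>2[x]\<close> become compositions of linearized
  polynomials.  For a quadratic Boolean function the squared Walsh coefficients are \<open>0\<close> or
  \<open>2^n |ker L|\<close> and sum to \<open>4^n\<close>, so \<open>f\<^sub>Q\<close> is bent iff \<open>ker L = {0}\<close> and
  semi-bent iff \<open>|ker L| = 2\<close>.

  Up to the factor \<open>\<alpha>\<close>, \<open>ker L\<close> is the solution set of \<open>G(y) = tr(y)\<close>.  As
  \<open>G(1) = c(1) = 1\<close> and the trace takes only the values \<open>0, 1\<close>, the solutions are \<open>0\<close>,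
  the element \<open>1\<close> when \<open>n\<close> is odd, and the nonzero roots of \<open>G\<close> of trace zero.  Since
  \<open>x^m - 1\<close> linearizes to \<open>y^(2^n) - y = 0\<close>, \<open>G\<close> is injective when \<open>c(x^k)\<close> is
  coprime to \<open>x^m - 1\<close>.  Otherwise a common factor gives \<open>x^m - 1 = d h\<close> with
  \<open>h(1) = 0\<close> and \<open>deg h < m\<close>, and any nonzero value of the linearized \<open>h\<close> is a root of
  \<open>G\<close> of trace \<open>h(1) tr(y) = 0\<close>.
\<close>

lemma of_nat_card_eq_0: "of_nat (card (UNIV :: 'a set)) = (0::'a::{ring_1,finite})"
proof -
  have "(\<Sum>y\<in>UNIV. 1 + y) = (\<Sum>y\<in>(UNIV::'a set). y)"
    by (rule sum.reindex_bij_witness[of _ "\<lambda>y. y - 1" "\<lambda>y. 1 + y"]) auto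
  then show ?thesis
    by (simp add: sum.distrib)
qed

lemma power_card_eq_self: "x ^ card (UNIV :: 'a set) = (x::'a::{field,finite})"
proof (cases "x = 0")
  case False
  let ?U = "UNIV - {0::'a}"
  have "(\<Prod>y\<in>?U. x * y) = (\<Prod>y\<in>?U. y)"
    by (rule prod.reindex_bij_witness[of _ "\<lambda>y. y / x" "\<lambda>y. x * y"]) (use False in auto)
  then have "x ^ card ?U = 1"
    by (simp add: prod.distrib)
  moreover have "card (UNIV :: 'a set) = Suc (card ?U)"
    using card_Suc_Diff1[of "UNIV::'a set" 0] by simp
  ultimately show ?thesis
    by (simp only: power_Suc mult_1_right)
qed (simp add: card_gt_0_iff)

lemma ex_sum_powers_nonzero:
  assumes "finite E" "E \<noteq> {}" "\<forall>d\<in>E. d < card (UNIV :: 'a set)"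
  shows "\<exists>y::'a::{field,finite}. (\<Sum>d\<in>E. y ^ d) \<noteq> 0"
proof (rule ccontr)
  assume vanish: "\<not> ?thesis"
  define P :: "'a poly" where "P = (\<Sum>d\<in>E. monom 1 d)"
  have "coeff P (Max E) = 1"
    using assms by (simp add: P_def coeff_sum coeff_monom sum.delta')
  then have "P \<noteq> 0"
    by auto
  have "degree P \<le> Max E"
    using assms(1) by (intro degree_le) (auto simp: P_def coeff_sum coeff_monom dest: Max_ge)
  moreover have "{x. poly P x = 0} = UNIV"
    using vanish by (simp add: P_def poly_sum poly_monom)
  then have "card (UNIV :: 'a set) \<le> degree P"
    using card_poly_roots_bound[OF \<open>P \<noteq> 0\<close>] by simp
  moreover have "Max E < card (UNIV :: 'a set)"
    using assms by simp
  ultimately show False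
    by linarith
qed

lemma power_2_power_Suc: "(a::'a::monoid_mult) ^ 2 ^ Suc j = (a ^ 2 ^ j) ^ 2"
  by (simp add: power_mult[symmetric] mult.commute)

lemma power_2_power_mult_eq_self:
  "(b::'a::monoid_mult) ^ 2 ^ e = b \<Longrightarrow> b ^ 2 ^ (e * t) = b"
  by (induction t) (simp_all add: power_add power_mult)

lemma idempotent_in_01: "(t::'a::idom) ^ 2 = t \<Longrightarrow> t \<in> {0, 1}"
  by (simp add: power2_eq_square)

lemma sum_translate: "(\<Sum>y\<in>UNIV. F y) = (\<Sum>z\<in>UNIV. F (x + z))" for x :: "'a::group_add"
  by (rule sum.reindex_bij_witness[of _ "\<lambda>z. x + z" "\<lambda>y. - x + y"]) (simp_all add: add.assoc[symmetric])

lemma sum_reflect_pairs: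
  fixes w :: "nat \<Rightarrow> 'b::comm_monoid_add"
  assumes "1 \<le> h" "h \<le> n + 1 - h"
  shows "(\<Sum>i\<in>{1..<n}. w i) = (\<Sum>i\<in>{1..<h}. w i + w (n - i)) + (\<Sum>i\<in>{h..<n + 1 - h}. w i)"
proof -
  have "(\<Sum>i\<in>{1..<n}. w i) = (\<Sum>i\<in>{1..<h}. w i) + (\<Sum>i\<in>{h..<n + 1 - h}. w i)
      + (\<Sum>i\<in>{n + 1 - h..<n}. w i)"
    using assms by (simp add: sum.atLeastLessThan_concat)
  also have "(\<Sum>i\<in>{n + 1 - h..<n}. w i) = (\<Sum>i\<in>{1..<h}. w (n - i))"
    by (rule sum.reindex_bij_witness[of _ "\<lambda>i. n - i" "\<lambda>i. n - i"]) (use assms in auto)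
  finally show ?thesis
    by (simp only: sum.distrib ac_simps)
qed

lemma abs_eq_2_power_iff: "\<bar>x\<bar> = 2 ^ k \<longleftrightarrow> x^2 = ((2::int) ^ k)^2"
  by (metis abs_ge_zero power2_abs power2_eq_iff_nonneg zero_le_power zero_le_numeral)

lemma abs_in_0_2_power_iff: "\<bar>x\<bar> \<in> {0, 2 ^ k} \<longleftrightarrow> x^2 \<in> {0, ((2::int) ^ k)^2}"
  by (simp add: abs_eq_2_power_iff)

lemma tr_0 [simp]: "tr r (0::'a::field) = 0"
  by (simp add: tr_def power_0_left)

lemma tr_add_length: "tr (a + b) u = tr a u + tr b (u ^ 2 ^ a)"
  by (induction b) (simp_all add: tr_def power_add power_mult[symmetric] add.assoc)

definition of_bit :: "bit \<Rightarrow> 'a::zero_neq_one" where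
  "of_bit b = (if b = 1 then 1 else 0)"

lemma of_bit_0 [simp]: "of_bit 0 = 0" and of_bit_1 [simp]: "of_bit 1 = 1"
  by (simp_all add: of_bit_def)

lemma of_bit_mult: "of_bit (a * b) = (of_bit a * of_bit b :: 'a::field)"
  by (cases a; cases b) simp_all

lemma of_bit_power: "k \<ge> 1 \<Longrightarrow> (of_bit b :: 'a::field) ^ k = of_bit b"
  by (cases b) simp_all

definition linearized :: "nat \<Rightarrow> bit poly \<Rightarrow> 'a::field \<Rightarrow> 'a" where
  "linearized e q y = (\<Sum>t\<le>degree q. of_bit (coeff q t) * y ^ 2 ^ (e * t))"

lemma linearized_eq_sum_lessThan:
  "degree q < N \<Longrightarrow> linearized e q y = (\<Sum>t<N. of_bit (coeff q t) * y ^ 2 ^ (e * t))"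
  unfolding linearized_def by (rule sum.mono_neutral_left) (auto simp: coeff_eq_0)

lemma linearized_0 [simp]: "linearized e 0 y = 0"
  by (simp add: linearized_def)

lemma linearized_1 [simp]: "linearized e 1 y = y"
  by (simp add: linearized_def)

lemma linearized_0_right [simp]: "linearized e q (0::'a::field) = 0"
  by (simp add: linearized_def power_0_left)

lemma linearized_monom: "linearized e (monom 1 t) y = y ^ 2 ^ (e * t)"
proof -
  have "linearized e (monom 1 t) y = (\<Sum>s\<le>t. if s = t then y ^ 2 ^ (e * s) else 0)"
    unfolding linearized_def by (intro sum.cong) (auto simp: degree_monom_eq coeff_monom)
  then show ?thesis
    by simp
qed

lemma linearized_smult: "linearized e (smult a q) y = of_bit a * linearized e q y"
proof -
  have "degree (smult a q) < Suc (degree q)"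
    using degree_smult_le[of a q] by simp
  then show ?thesis
    by (simp only: linearized_eq_sum_lessThan[of _ "Suc (degree q)"] coeff_smult of_bit_mult
        sum_distrib_left mult.assoc lessI)
qed

lemma linearized_pCons: "linearized e (pCons a p) y = of_bit a * y + linearized e p (y ^ 2 ^ e)"
proof -
  have "degree (pCons a p) < Suc (Suc (degree p))"
    by (simp add: degree_pCons_le le_imp_less_Suc)
  then have "linearized e (pCons a p) y
      = of_bit a * y + (\<Sum>t<Suc (degree p). of_bit (coeff p t) * y ^ 2 ^ (e * Suc t))"
    by (simp add: linearized_eq_sum_lessThan sum.lessThan_Suc_shift del: sum.lessThan_Suc)
  also have "\<dots> = of_bit a * y + linearized e p (y ^ 2 ^ e)"
    by (simp add: linearized_eq_sum_lessThan[of p "Suc (degree p)"] power_add flip: power_mult)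
  finally show ?thesis .
qed

lemma degree_X_power_minus_1:
  assumes "m \<ge> 1"
  shows "degree (monom 1 m - 1 :: bit poly) = m"
proof -
  have "degree (monom 1 m + - 1 :: bit poly) = m"
    using assms by (subst degree_add_eq_left) (simp_all add: degree_monom_eq)
  then show ?thesis
    by simp
qed

lemma pcompose_monom_1: "pcompose (monom 1 i) q = q ^ i"
  by (induction i) (simp_all add: pcompose_1 monom_Suc pcompose_pCons)

lemma c_poly_pcompose_monom:
  "pcompose (c_poly m c) (monom 1 k) =
    1 + (\<Sum>i\<in>{1..(m - 1) div 2}. smult (c i) (monom 1 (k * i) + monom 1 (k * (m - i))))"
  by (simp add: c_poly_def pcompose_1 pcompose_add pcompose_sum pcompose_smult pcompose_monom_1 monom_power
      mult.commute del: add_bit_eq_xor mult_bit_eq_and)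

lemma poly_c_poly_pcompose_1: "poly (pcompose (c_poly m c) (monom 1 k)) 1 = 1"
  by (simp add: c_poly_pcompose_monom poly_sum poly_monom del: add_bit_eq_xor mult_bit_eq_and)

definition has_polar :: "nat \<Rightarrow> ('a::field \<Rightarrow> 'a) \<Rightarrow> ('a \<Rightarrow> 'a) \<Rightarrow> bool" where
  "has_polar n f L \<longleftrightarrow> (\<forall>x z. f (x + z) = f x + f z + tr n (x * L z))"

context
  fixes n :: nat
  assumes card_UNIV: "card (UNIV :: 'a::{field,finite} set) = 2 ^ n"
begin

lemma two_eq_zero: "(2::'a) = 0"
  using of_nat_card_eq_0[where 'a='a] by (simp add: card_UNIV)

lemma add_self_eq_zero [simp]: "(x::'a) + x = 0"
  by (simp flip: mult_2 add: two_eq_zero)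

lemma add_eq_zero_iff_eq: "(x::'a) + y = 0 \<longleftrightarrow> x = y"
  by (metis add_self_eq_zero add_right_cancel)

lemma n_ge_1: "n \<ge> 1"
proof (rule ccontr)
  assume "\<not> n \<ge> 1"
  then have "card (UNIV :: 'a set) = 1"
    by (simp add: card_UNIV)
  then show False
    by (metis card_1_singletonE insertE zero_neq_one UNIV_I empty_iff)
qed

lemma power_2_power_n [simp]: "(x::'a) ^ 2 ^ n = x"
  using power_card_eq_self[of x] by (simp add: card_UNIV)

lemma power_2_power_n_mult [simp]: "(x::'a) ^ 2 ^ (n * t) = x"
  by (rule power_2_power_mult_eq_self) simp

lemma frobenius_add: "((x::'a) + y) ^ 2 ^ j = x ^ 2 ^ j + y ^ 2 ^ j"
proof (induction j)
  case (Suc j)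
  have square_add: "(a + b) ^ 2 = a ^ 2 + b ^ 2" for a b :: 'a
    by (simp add: power2_sum two_eq_zero)
  show ?case
    by (simp only: power_2_power_Suc Suc square_add)
qed simp

lemma frobenius_sum: "(sum f A) ^ 2 ^ j = (\<Sum>i\<in>A. (f i :: 'a) ^ 2 ^ j)"
  by (induction A rule: infinite_finite_induct) (simp_all add: frobenius_add)

lemma tr_add: "tr r ((u::'a) + v) = tr r u + tr r v"
  by (simp add: tr_def frobenius_add sum.distrib)

lemma tr_sum: "tr r (sum f A) = (\<Sum>i\<in>A. tr r (f i :: 'a))"
  by (induction A rule: infinite_finite_induct) (simp_all add: tr_add)

lemma tr_square: "tr r ((u::'a) ^ 2) = (tr r u) ^ 2"
  using frobenius_sum[of "\<lambda>j. u ^ 2 ^ j" "{..<r}" 1]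
  by (simp add: tr_def flip: power_2_power_Suc) (simp add: power_2_power_Suc power_mult[symmetric] mult.commute)

lemma tr_in_01_subfield:
  assumes "(u::'a) ^ 2 ^ r = u"
  shows "tr r u \<in> {0, 1}"
proof (rule idempotent_in_01)
  have "tr (Suc r) u = u + tr r (u ^ 2)"
    using tr_add_length[of 1 r u] by (simp add: tr_def)
  moreover have "tr (Suc r) u = tr r u + u"
    using assms by (simp add: tr_def)
  ultimately show "(tr r u) ^ 2 = tr r u"
    by (simp add: tr_square add.commute)
qed

lemma tr_in_01: "tr n (u::'a) \<in> {0, 1}"
  by (rule tr_in_01_subfield) simp

lemma tr_power_2_power [simp]: "tr n ((u::'a) ^ 2 ^ s) = tr n u"
proof (induction s)
  case (Suc s)
  have "tr n ((u ^ 2 ^ s) ^ 2) = tr n (u ^ 2 ^ s)"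
    using tr_in_01[of "u ^ 2 ^ s"] by (auto simp: tr_square)
  with Suc show ?case
    by (simp only: power_2_power_Suc)
qed simp

lemma ex_tr_eq_1: "\<exists>t::'a. tr n t = 1"
proof -
  have inj: "inj_on (\<lambda>j::nat. (2::nat) ^ j) {..<n}"
    by (simp add: inj_on_def)
  have "\<exists>y::'a. (\<Sum>d\<in>(\<lambda>j. 2 ^ j) ` {..<n}. y ^ d) \<noteq> 0"
    using n_ge_1 by (intro ex_sum_powers_nonzero) (auto simp: card_UNIV lessThan_empty_iff)
  then obtain y :: 'a where "tr n y \<noteq> 0"
    by (auto simp: tr_def sum.reindex[OF inj])
  then show ?thesis
    using tr_in_01[of y] by blast
qed

lemma tr_nondegenerate:
  assumes "\<And>x. tr n (x * d) = 0"
  shows "(d::'a) = 0"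
proof (rule ccontr)
  assume "d \<noteq> 0"
  obtain t :: 'a where "tr n t = 1"
    using ex_tr_eq_1 by blast
  moreover have "tr n (t / d * d) = 0"
    by (rule assms)
  ultimately show False
    using \<open>d \<noteq> 0\<close> by simp
qed

lemma of_nat_eq_if_even: "(of_nat j :: 'a) = (if even j then 0 else 1)"
  by (induction j) simp_all

lemma tr_1: "tr n (1::'a) = (if even n then 0 else 1)"
  by (simp add: tr_def of_nat_eq_if_even)

lemma add_in_01: "(u::'a) \<in> {0, 1} \<Longrightarrow> v \<in> {0, 1} \<Longrightarrow> u + v \<in> {0, 1}"
  by auto

lemma sum_in_01: "(\<And>i. i \<in> A \<Longrightarrow> f i \<in> {0, 1}) \<Longrightarrow> sum f A \<in> {0, 1::'a}"
proof (induction A rule: infinite_finite_induct)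
  case (insert x F)
  then show ?case
    by (metis add_in_01 insertCI sum.insert)
qed simp_all

lemma sgn1_0 [simp]: "sgn1 0 = 1"
  by (simp add: sgn1_def)

lemma sgn1_mult_self [simp]: "sgn1 u * sgn1 u = 1"
  by (simp add: sgn1_def)

lemma sgn1_add: "(u::'a) \<in> {0, 1} \<Longrightarrow> v \<in> {0, 1} \<Longrightarrow> sgn1 (u + v) = sgn1 u * sgn1 v"
  by (auto simp: sgn1_def)

lemma sum_sgn1_shift_eq_0:
  fixes A :: "'a set"
  assumes "\<And>x. x \<in> A \<Longrightarrow> x + c \<in> A" "\<And>x. x \<in> A \<Longrightarrow> h x \<in> {0, 1}"
    and "\<And>x. x \<in> A \<Longrightarrow> h (x + c) = h x + 1"
  shows "(\<Sum>x\<in>A. sgn1 (h x :: 'a)) = 0"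
proof -
  have "(\<Sum>x\<in>A. sgn1 (h x)) = (\<Sum>x\<in>A. sgn1 (h (x + c)))"
    by (rule sum.reindex_bij_witness[of _ "\<lambda>x. x + c" "\<lambda>x. x + c"]) (simp_all add: assms(1) add.assoc)
  also have "\<dots> = - (\<Sum>x\<in>A. sgn1 (h x))"
    unfolding sum_negf[symmetric] by (rule sum.cong) (auto simp: assms(3) sgn1_def dest!: assms(2))
  finally show ?thesis
    by linarith
qed

lemma sum_sgn1_tr: "(\<Sum>x\<in>UNIV. sgn1 (tr n (x * d))) = (if (d::'a) = 0 then 2 ^ n else 0)"
proof (cases "d = 0")
  case False
  obtain t :: 'a where "tr n t = 1"
    using ex_tr_eq_1 by blast
  then have "(\<Sum>x\<in>UNIV. sgn1 (tr n (x * d))) = 0"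
    using False by (intro sum_sgn1_shift_eq_0[where c = "t / d"] tr_in_01) (simp_all add: tr_add distrib_right)
  then show ?thesis
    using False by simp
qed (simp add: sgn1_def card_UNIV)

lemma has_polarD:
  fixes f L :: "'a \<Rightarrow> 'a"
  shows "has_polar n f L \<Longrightarrow> f (x + z) = f x + f z + tr n (x * L z)"
  by (simp add: has_polar_def)

lemma has_polar_imp_0:
  fixes f L :: "'a \<Rightarrow> 'a"
  shows "has_polar n f L \<Longrightarrow> f 0 = 0"
  using has_polarD[of f L 0 0] by simp

lemma has_polar_map_add:
  fixes f L :: "'a \<Rightarrow> 'a"
  assumes polar: "has_polar n f L"
  shows "L (z + z') = L z + L z'"
proof -
  have tr_eq: "tr n (x * L (z + z')) = tr n (x * (L z + L z'))" for x
  proof -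
    have "f (x + z + z') = f x + f z + f z' + tr n (z * L z') + tr n (x * L (z + z'))"
      using has_polarD[OF polar, of x "z + z'"] has_polarD[OF polar, of z z'] by (simp add: add.assoc)
    moreover have "f (x + z + z') = f x + f z + f z' + tr n (z * L z') + tr n (x * (L z + L z'))"
      using has_polarD[OF polar, of "x + z" z'] has_polarD[OF polar, of x z]
      by (simp add: distrib_left distrib_right tr_add ac_simps)
    ultimately show ?thesis
      by simp
  qed
  have "L (z + z') + (L z + L z') = 0"
    by (rule tr_nondegenerate) (simp only: distrib_left[of _ "L (z + z')"] tr_add tr_eq add_self_eq_zero)
  then show ?thesis
    by (simp only: add_eq_zero_iff_eq)
qed

context
  fixes f L :: "'a \<Rightarrow> 'a"
  assumes f_01: "\<And>x. f x \<in> {0, 1}"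
    and polar: "has_polar n f L"
begin

(* After substituting y = x + z, the inner sum over x is the character sum of the linear form
   x \<mapsto> tr(x L(z)), which vanishes unless L(z) = 0. *)
lemma walsh_square: "(walsh n f a)^2 = 2 ^ n * (\<Sum>z | L z = 0. sgn1 (f z + tr n (a * z)))"
proof -
  define g where "g x = f x + tr n (a * x)" for x
  have g_01: "g x \<in> {0, 1}" for x
    unfolding g_def by (intro add_in_01 f_01 tr_in_01)
  have g_polar: "g (x + z) = g x + g z + tr n (x * L z)" for x z
    by (simp add: g_def has_polarD[OF polar] distrib_left tr_add ac_simps)
  have sgn1_g_polar: "sgn1 (g (x + z)) = sgn1 (g x) * sgn1 (g z) * sgn1 (tr n (x * L z))" for x z
    by (simp only: g_polar sgn1_add add_in_01 g_01 tr_in_01)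
  have "(walsh n f a)^2 = (\<Sum>x\<in>UNIV. \<Sum>y\<in>UNIV. sgn1 (g x) * sgn1 (g y))"
    by (simp add: walsh_def g_def power2_eq_square sum_product)
  also have "\<dots> = (\<Sum>x\<in>UNIV. \<Sum>z\<in>UNIV. sgn1 (g x) * sgn1 (g (x + z)))"
    by (rule sum.cong[OF refl]) (rule sum_translate)
  also have "\<dots> = (\<Sum>x\<in>UNIV. \<Sum>z\<in>UNIV. sgn1 (g z) * sgn1 (tr n (x * L z)))"
    by (simp add: sgn1_g_polar mult.assoc[symmetric] sgn1_mult_self)
  also have "\<dots> = (\<Sum>z\<in>UNIV. sgn1 (g z) * (\<Sum>x\<in>UNIV. sgn1 (tr n (x * L z))))"
    by (subst sum.swap) (simp add: sum_distrib_left)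
  also have "\<dots> = (\<Sum>z\<in>UNIV. if L z = 0 then 2 ^ n * sgn1 (g z) else 0)"
    by (intro sum.cong refl) (simp add: sum_sgn1_tr)
  also have "\<dots> = 2 ^ n * (\<Sum>z | L z = 0. sgn1 (g z))"
    by (simp add: sum.If_cases sum_distrib_left)
  finally show ?thesis
    by (simp add: g_def)
qed

(* On ker L the map z \<mapsto> f(z) + tr(a z) is additive: either it vanishes there, or it takes the
   value 1 at some z\<^sub>0 and translation by z\<^sub>0 swaps its values 0 and 1. *)
lemma kernel_sum_eq_0_or_card:
  "(\<Sum>z | L z = 0. sgn1 (f z + tr n (a * z))) \<in> {0, int (card {z. L z = 0})}"
proof -
  define g where "g z = f z + tr n (a * z)" for z
  have g_01: "g z \<in> {0, 1}" for z
    unfolding g_def by (intro add_in_01 f_01 tr_in_01)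
  show ?thesis
  proof (cases "\<exists>z\<^sub>0. L z\<^sub>0 = 0 \<and> g z\<^sub>0 = 1")
    case True
    then obtain z\<^sub>0 where z\<^sub>0: "L z\<^sub>0 = 0" "g z\<^sub>0 = 1"
      by blast
    have "(\<Sum>z | L z = 0. sgn1 (g z)) = 0"
      using z\<^sub>0 by (intro sum_sgn1_shift_eq_0[where c = z\<^sub>0] g_01)
        (simp_all add: has_polar_map_add[OF polar] g_def has_polarD[OF polar] distrib_left tr_add ac_simps)
    then show ?thesis
      by (simp add: g_def)
  next
    case False
    then have "g z = 0" if "L z = 0" for z
      using g_01[of z] that by auto
    then show ?thesis
      by (simp add: g_def sgn1_def)
  qed
qed

lemma sum_kernel_sums_eq: "(\<Sum>a\<in>UNIV. \<Sum>z | L z = 0. sgn1 (f z + tr n (a * z))) = 2 ^ n"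
proof -
  have "(\<Sum>a\<in>UNIV. \<Sum>z | L z = 0. sgn1 (f z + tr n (a * z)))
      = (\<Sum>a\<in>UNIV. \<Sum>z | L z = 0. sgn1 (f z) * sgn1 (tr n (a * z)))"
    by (simp only: sgn1_add f_01 tr_in_01)
  also have "\<dots> = (\<Sum>z | L z = 0. sgn1 (f z) * (\<Sum>a\<in>UNIV. sgn1 (tr n (a * z))))"
    by (subst sum.swap) (simp add: sum_distrib_left)
  also have "\<dots> = (\<Sum>z | L z = 0. if z = 0 then 2 ^ n else 0)"
    by (intro sum.cong refl) (simp add: sum_sgn1_tr has_polar_imp_0[OF polar])
  also have "\<dots> = 2 ^ n"
    using has_polar_map_add[OF polar, of 0 0] by (simp add: sum.delta')
  finally show ?thesis .
qed

lemma bent_iff_card_kernel: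
  assumes "even n"
  shows "bent n f \<longleftrightarrow> card {z. L z = 0} = 1"
proof -
  let ?S = "\<lambda>a. \<Sum>z | L z = 0. sgn1 (f z + tr n (a * z))"
  have power_n: "((2::int) ^ (n div 2))^2 = 2 ^ n"
    using assms by (simp flip: power_mult)
  have bent_iff: "bent n f \<longleftrightarrow> (\<forall>a. ?S a = 1)"
    unfolding bent_def abs_eq_2_power_iff power_n walsh_square by simp
  show ?thesis
  proof
    assume "bent n f"
    then have "?S 0 = 1"
      using bent_iff by blast
    then show "card {z. L z = 0} = 1"
      using kernel_sum_eq_0_or_card[of 0] by auto
  next
    assume "card {z. L z = 0} = 1"
    moreover have "L 0 = 0"
      using has_polar_map_add[OF polar, of 0 0] by simp
    ultimately have "{z. L z = 0} = {0}"
      by (metis (mono_tags) card_1_singletonE mem_Collect_eq singletonD)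
    then show "bent n f"
      by (simp add: bent_iff has_polar_imp_0[OF polar])
  qed
qed

lemma semi_bent_iff_card_kernel:
  assumes "odd n"
  shows "semi_bent n f \<longleftrightarrow> card {z. L z = 0} = 2"
proof -
  let ?S = "\<lambda>a. \<Sum>z | L z = 0. sgn1 (f z + tr n (a * z))"
  have power_n: "((2::int) ^ ((n + 2) div 2))^2 = 2 * 2 ^ n"
  proof -
    have "(n + 2) div 2 * 2 = Suc n"
      using assms by presburger
    then show ?thesis
      by (metis power_mult power_Suc)
  qed
  have semi_bent_iff: "semi_bent n f \<longleftrightarrow> (\<forall>a. ?S a \<in> {0, 2})"
    unfolding semi_bent_def abs_in_0_2_power_iff power_n walsh_square by auto
  obtain a where "?S a \<noteq> 0"
    using sum_kernel_sums_eq by (metis (no_types, lifting) sum.neutral zero_neq_numeral power_eq_0_iff)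
  then have S_a: "?S a = int (card {z. L z = 0})"
    using kernel_sum_eq_0_or_card[of a] by simp
  show ?thesis
  proof
    assume "semi_bent n f"
    then show "card {z. L z = 0} = 2"
      using S_a \<open>?S a \<noteq> 0\<close> semi_bent_iff by fastforce
  next
    assume "card {z. L z = 0} = 2"
    then show "semi_bent n f"
      using kernel_sum_eq_0_or_card semi_bent_iff by simp
  qed
qed

end

lemma has_polar_add:
  fixes f g L M :: "'a \<Rightarrow> 'a"
  shows "has_polar n f L \<Longrightarrow> has_polar n g M \<Longrightarrow> has_polar n (\<lambda>x. f x + g x) (\<lambda>z. L z + M z)"
  by (simp add: has_polar_def distrib_left tr_add ac_simps)

lemma has_polar_sum:
  fixes f L :: "'i \<Rightarrow> 'a \<Rightarrow> 'a"
  shows "(\<And>i. i \<in> I \<Longrightarrow> has_polar n (f i) (L i)) \<Longrightarrow>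
    has_polar n (\<lambda>x. \<Sum>i\<in>I. f i x) (\<lambda>z. \<Sum>i\<in>I. L i z)"
proof (induction I rule: infinite_finite_induct)
  case (insert i I)
  then show ?case
    using has_polar_add[of "f i" "L i"] by simp
qed (simp_all add: has_polar_def)

lemma has_polar_of_bit_mult:
  fixes f L :: "'a \<Rightarrow> 'a"
  shows "has_polar n f L \<Longrightarrow> has_polar n (\<lambda>x. of_bit b * f x) (\<lambda>z. of_bit b * L z)"
  by (cases b) (simp_all add: has_polar_def of_bit_def)

lemma has_polar_comp_mult:
  fixes f L :: "'a \<Rightarrow> 'a"
  shows "has_polar n f L \<Longrightarrow> has_polar n (\<lambda>x. f (a * x)) (\<lambda>z. a * L (a * z))"
  by (simp add: has_polar_def distrib_left ac_simps)

lemma add_power_1_plus_2_power: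
  "((x::'a) + z) ^ (1 + 2 ^ j) = x ^ (1 + 2 ^ j) + z ^ (1 + 2 ^ j) + x * z ^ 2 ^ j + z * x ^ 2 ^ j"
  by (simp add: power_add frobenius_add algebra_simps)

(* Invariance of tr under Frobenius moves the exponent 2^j from x onto z. *)
lemma has_polar_tr_power:
  assumes "j + s = n * t" "(b::'a) ^ 2 ^ s = b"
  shows "has_polar n (\<lambda>x. tr n (b * x ^ (1 + 2 ^ j))) (\<lambda>z. b * (z ^ 2 ^ j + z ^ 2 ^ s))"
proof -
  have swap: "tr n (b * (z * x ^ 2 ^ j)) = tr n (x * (b * z ^ 2 ^ s))" for x z
  proof -
    have "(b * (z * x ^ 2 ^ j)) ^ 2 ^ s = x * (b * z ^ 2 ^ s)"
      using assms by (simp add: power_mult_distrib ac_simps flip: power_mult power_add)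
    then show ?thesis
      using tr_power_2_power[of "b * (z * x ^ 2 ^ j)" s] by simp
  qed
  show ?thesis
    unfolding has_polar_def
  proof (intro allI)
    fix x z
    have "tr n (b * (x + z) ^ (1 + 2 ^ j)) = tr n (b * x ^ (1 + 2 ^ j)) + tr n (b * z ^ (1 + 2 ^ j))
        + tr n (x * (b * z ^ 2 ^ j)) + tr n (b * (z * x ^ 2 ^ j))"
      by (simp only: add_power_1_plus_2_power distrib_left tr_add) (simp add: ac_simps)
    then show "tr n (b * (x + z) ^ (1 + 2 ^ j)) = tr n (b * x ^ (1 + 2 ^ j)) + tr n (b * z ^ (1 + 2 ^ j))
        + tr n (x * (b * (z ^ 2 ^ j + z ^ 2 ^ s)))"
      by (simp add: swap distrib_left tr_add add.assoc)
  qed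
qed

lemma has_polar_tr_power_1:
  "j \<le> n \<Longrightarrow> has_polar n (\<lambda>x::'a. tr n (x ^ (1 + 2 ^ j))) (\<lambda>z. z ^ 2 ^ j + z ^ 2 ^ (n - j))"
  using has_polar_tr_power[of j "n - j" 1 1] by simp

lemma has_polar_tr_half_power:
  assumes "n = h + h"
  shows "has_polar n (\<lambda>x::'a. tr h (x ^ (1 + 2 ^ h))) (\<lambda>z. z ^ 2 ^ h)"
proof -
  have "tr h (x * z ^ 2 ^ h) + tr h (z * x ^ 2 ^ h) = tr n (x * z ^ 2 ^ h)" for x z :: 'a
  proof -
    have "(x * z ^ 2 ^ h) ^ 2 ^ h = z * x ^ 2 ^ h"
      using assms[symmetric] by (simp add: power_mult_distrib mult.commute flip: power_mult power_add)
    then show ?thesis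
      using tr_add_length[of h h "x * z ^ 2 ^ h"] assms by simp
  qed
  then show ?thesis
    unfolding has_polar_def add_power_1_plus_2_power by (simp add: tr_add ac_simps)
qed

lemma tr_plus_self: "tr n z + (z::'a) = (\<Sum>i\<in>{1..<n}. z ^ 2 ^ i)"
proof -
  have "tr n z = z + (\<Sum>i\<in>{1..<n}. z ^ 2 ^ i)"
    using n_ge_1 by (simp add: tr_def atLeast0LessThan[symmetric] sum.atLeast_Suc_lessThan)
  then show ?thesis
    by (simp add: add.assoc[symmetric] add.commute[of _ z])
qed

lemma has_polar_p_fun: "has_polar n (p_fun n) (\<lambda>z::'a. tr n z + z)"
proof (cases "even n")
  case True
  define h where "h = n div 2"
  have n: "n = h + h" and h: "1 \<le> h" "h \<le> n + 1 - h"
    using True n_ge_1 by (auto simp: h_def)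
  have p_eq: "p_fun n = (\<lambda>x. (\<Sum>i\<in>{1..<h}. tr n (x ^ (1 + 2 ^ i))) + tr h (x ^ (1 + 2 ^ h)))"
    using True by (simp add: fun_eq_iff p_fun_def h_def)
  have L_eq: "(\<lambda>z. tr n z + z) = (\<lambda>z::'a. (\<Sum>i\<in>{1..<h}. z ^ 2 ^ i + z ^ 2 ^ (n - i)) + z ^ 2 ^ h)"
    unfolding tr_plus_self sum_reflect_pairs[OF h] by (simp add: n)
  show ?thesis
    unfolding p_eq L_eq
    by (intro has_polar_add has_polar_sum has_polar_tr_power_1 has_polar_tr_half_power[OF n]) (simp_all add: n)
next
  case False
  define h where "h = Suc ((n - 1) div 2)"
  have h: "1 \<le> h" "h \<le> n + 1 - h" "n + 1 - h = h" "h \<le> n"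
    using False n_ge_1 by (auto simp: h_def elim!: oddE)
  have p_eq: "p_fun n = (\<lambda>x. \<Sum>i\<in>{1..<h}. tr n (x ^ (1 + 2 ^ i)))"
    using False by (simp add: fun_eq_iff p_fun_def h_def atLeastLessThanSuc_atLeastAtMost)
  have L_eq: "(\<lambda>z. tr n z + z) = (\<lambda>z::'a. \<Sum>i\<in>{1..<h}. z ^ 2 ^ i + z ^ 2 ^ (n - i))"
    unfolding tr_plus_self sum_reflect_pairs[OF h(1,2)] h(3) by simp
  show ?thesis
    unfolding p_eq L_eq by (intro has_polar_sum has_polar_tr_power_1) (use h(4) in simp)
qed

lemma of_bit_add: "of_bit (a + b) = (of_bit a + of_bit b :: 'a)"
  by (cases a; cases b) simp_all

lemma of_bit_sum: "of_bit (sum f A) = (\<Sum>i\<in>A. of_bit (f i) :: 'a)"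
  by (induction A rule: infinite_finite_induct) (simp_all add: of_bit_add del: add_bit_eq_xor)

lemma linearized_add: "linearized e (p + q) (y::'a) = linearized e p y + linearized e q y"
proof -
  define N where "N = Suc (max (degree p) (degree q))"
  have "degree (p + q) < N" "degree p < N" "degree q < N"
    using degree_add_le_max[of p q] by (auto simp: N_def)
  then show ?thesis
    by (simp add: linearized_eq_sum_lessThan of_bit_add sum.distrib distrib_right del: add_bit_eq_xor)
qed

lemma linearized_sum: "linearized e (sum f A) (y::'a) = (\<Sum>i\<in>A. linearized e (f i) y)"
  by (induction A rule: infinite_finite_induct) (simp_all add: linearized_add)

lemma linearized_diff: "linearized e (p - q) (y::'a) = linearized e p y - linearized e q y"
  using linearized_add[of e "p - q" q y] by (simp add: eq_diff_eq)

lemma linearized_add_right: "linearized e q ((y::'a) + z) = linearized e q y + linearized e q z"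
  by (simp add: linearized_def frobenius_add distrib_left sum.distrib)

lemma linearized_power_2_power: "linearized e q ((y::'a) ^ 2 ^ e) = (linearized e q y) ^ 2 ^ e"
  by (simp add: linearized_def frobenius_sum power_mult_distrib of_bit_power mult.commute
      flip: power_mult)

lemma linearized_mult: "linearized e (p * q) (y::'a) = linearized e p (linearized e q y)"
proof (induction p arbitrary: y)
  case (pCons a p)
  have "linearized e (pCons a p * q) y = of_bit a * linearized e q y + linearized e (p * q) (y ^ 2 ^ e)"
    by (simp add: linearized_add linearized_smult linearized_pCons)
  also have "\<dots> = linearized e (pCons a p) (linearized e q y)"
    by (simp add: pCons linearized_power_2_power linearized_pCons)
  finally show ?case .
qed simp

lemma linearized_1_right: "linearized e q (1::'a) = of_bit (poly q 1)"
  by (simp only: linearized_def poly_altdef power_one mult_1_right of_bit_sum)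

lemma tr_linearized: "tr n (linearized e q (y::'a)) = of_bit (poly q 1) * tr n y"
proof -
  have "tr n (of_bit b * u) = of_bit b * tr n u" for b and u :: 'a
    by (cases b) simp_all
  then have "tr n (linearized e q y) = (\<Sum>t\<le>degree q. of_bit (coeff q t) * tr n y)"
    by (simp add: linearized_def tr_sum)
  then show ?thesis
    by (simp only: poly_altdef power_one mult_1_right of_bit_sum sum_distrib_right)
qed

lemma linearized_X_power_minus_1: "e * m = n \<Longrightarrow> linearized e (monom 1 m - 1) (y::'a) = 0"
  by (simp add: linearized_diff linearized_monom)

lemma ex_linearized_nonzero:
  assumes "q \<noteq> 0" "degree q < m" "e * m = n" "e \<ge> 1"
  shows "\<exists>y::'a. linearized e q y \<noteq> 0"
proof -
  define T where "T = {t \<in> {..degree q}. coeff q t = 1}"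
  have inj: "inj_on (\<lambda>t. (2::nat) ^ (e * t)) T"
    using assms(4) by (auto simp: inj_on_def)
  have "linearized e q y = (\<Sum>d\<in>(\<lambda>t. 2 ^ (e * t)) ` T. y ^ d)" for y :: 'a
  proof -
    have "linearized e q y = (\<Sum>t\<le>degree q. if coeff q t = 1 then y ^ 2 ^ (e * t) else 0)"
      unfolding linearized_def by (intro sum.cong refl) (simp add: of_bit_def)
    also have "\<dots> = (\<Sum>t\<in>T. y ^ 2 ^ (e * t))"
      unfolding T_def by (rule sum.inter_filter[symmetric]) simp
    finally show ?thesis
      by (simp add: sum.reindex[OF inj])
  qed
  moreover have "\<exists>y::'a. (\<Sum>d\<in>(\<lambda>t. 2 ^ (e * t)) ` T. y ^ d) \<noteq> 0"
  proof (rule ex_sum_powers_nonzero)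
    have "degree q \<in> T"
      using assms(1) by (simp add: T_def flip: bit_not_zero_iff)
    then show "(\<lambda>t. 2 ^ (e * t)) ` T \<noteq> {}"
      by blast
    have "e * t < n" if "t \<in> T" for t
      using that assms(2-4) by (auto simp: T_def)
    then show "\<forall>d\<in>(\<lambda>t. 2 ^ (e * t)) ` T. d < card (UNIV :: 'a set)"
      by (auto simp: card_UNIV)
  qed (simp add: T_def)
  ultimately show ?thesis
    by metis
qed

(* A nonzero annihilator of y of least degree divides every annihilator, and it is not a unit
   because linearized e 1 is the identity. *)
lemma linearized_common_root_not_coprime:
  assumes "linearized e p y = 0" "linearized e q y = 0" "(y::'a) \<noteq> 0" "q \<noteq> 0"
  shows "\<not> coprime p q"
proof -
  define annihilates where "annihilates r \<longleftrightarrow> r \<noteq> 0 \<and> linearized e r y = 0" for r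
  obtain d where d: "annihilates d" and d_min: "\<And>r. annihilates r \<Longrightarrow> degree d \<le> degree r"
    using ex_has_least_nat[of annihilates q degree] assms(2,4) by (auto simp: annihilates_def)
  have d_dvd: "d dvd r" if "linearized e r y = 0" for r
  proof -
    have "linearized e (r mod d) y = 0"
      using that d by (simp add: annihilates_def linearized_diff linearized_mult flip: minus_div_mult_eq_mod)
    then have "r mod d = 0"
      using d d_min[of "r mod d"] degree_mod_less'[of d r] by (force simp: annihilates_def)
    then show ?thesis
      by (simp add: mod_eq_0_iff_dvd)
  qed
  have "\<not> is_unit d"
  proof
    assume "is_unit d"
    then obtain a where "d = [:a:]"
      by (metis is_unit_iff_degree degree_eq_zeroE d annihilates_def)
    then have "d = 1"
      using d by (cases a) (simp_all add: annihilates_def one_pCons)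
    then show False
      using d assms(3) by (simp add: annihilates_def)
  qed
  then show ?thesis
    by (rule not_coprimeI[OF d_dvd[OF assms(1)] d_dvd[OF assms(2)]])
qed

lemma coprime_linearized_root_eq_0:
  assumes "coprime q (monom 1 m - 1)" "e * m = n" "m \<ge> 1" "linearized e q (y::'a) = 0"
  shows "y = 0"
proof (rule ccontr)
  assume "y \<noteq> 0"
  have "monom 1 m - 1 \<noteq> (0 :: bit poly)"
    using degree_X_power_minus_1[OF assms(3)] assms(3) by auto
  then show False
    using linearized_common_root_not_coprime[OF assms(4) linearized_X_power_minus_1[OF assms(2)] \<open>y \<noteq> 0\<close>]
      assms(1) by blast
qed

lemma not_coprime_ex_linearized_root:
  assumes "\<not> coprime q (monom 1 m - 1)" "poly q 1 \<noteq> 0" "e * m = n" "e \<ge> 1" "m \<ge> 1"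
  shows "\<exists>w::'a. w \<noteq> 0 \<and> linearized e q w = 0 \<and> tr n w = 0"
proof -
  let ?X = "monom 1 m - 1 :: bit poly"
  obtain d where "d dvd q" "d dvd ?X" "\<not> is_unit d"
    using assms(1) by (rule not_coprimeE)
  then obtain h r where X: "?X = d * h" and q: "q = d * r"
    by (auto elim!: dvdE)
  have "?X \<noteq> 0" "degree ?X = m"
    using degree_X_power_minus_1[OF assms(5)] assms(5) by auto
  then have "d \<noteq> 0" "h \<noteq> 0"
    using X by auto
  then have "degree h < m"
    using X \<open>degree ?X = m\<close> \<open>\<not> is_unit d\<close> by (auto simp: degree_mult_eq is_unit_iff_degree)
  have "poly (d * h) 1 = 0"
    unfolding X[symmetric] by (simp add: poly_monom)
  moreover have "poly d 1 \<noteq> 0"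
    using assms(2) q by (auto simp: poly_mult)
  ultimately have "poly h 1 = 0"
    by (simp add: poly_mult)
  obtain y :: 'a where "linearized e h y \<noteq> 0"
    using ex_linearized_nonzero[OF \<open>h \<noteq> 0\<close> \<open>degree h < m\<close> assms(3,4)] by blast
  moreover have "linearized e q (linearized e h y) = 0"
  proof -
    have "q * h = r * ?X"
      using X q by (simp add: ac_simps)
    then have "linearized e q (linearized e h y) = linearized e r (linearized e ?X y)"
      by (simp flip: linearized_mult)
    then show ?thesis
      by (simp add: linearized_X_power_minus_1[OF assms(3)])
  qed
  moreover have "tr n (linearized e h y) = 0"
    by (simp add: tr_linearized \<open>poly h 1 = 0\<close>)
  ultimately show ?thesis
    by blast
qed

lemma card_linearized_eq_tr_iff_coprime:
  assumes "poly q 1 = 1" "e * m = n" "e \<ge> 1" "m \<ge> 1"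
  shows "card {y::'a. linearized e q y = tr n y} = (if even n then 1 else 2)
    \<longleftrightarrow> coprime q (monom 1 m - 1)" (is "card ?Y = _ \<longleftrightarrow> _")
proof -
  have L_1: "linearized e q (1::'a) = 1"
    using assms(1) by (simp add: linearized_1_right)
  show ?thesis
  proof
    assume card: "card ?Y = (if even n then 1 else 2)"
    show "coprime q (monom 1 m - 1)"
    proof (rule ccontr)
      assume "\<not> coprime q (monom 1 m - 1)"
      then obtain w :: 'a where w: "w \<noteq> 0" "linearized e q w = 0" "tr n w = 0"
        using not_coprime_ex_linearized_root[OF _ _ assms(2-4)] assms(1) by auto
      then have "w \<noteq> 1"
        using L_1 by auto
      have "insert w (if even n then {0} else {0, 1}) \<subseteq> ?Y"
        using w L_1 by (auto simp: tr_1)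
      from card_mono[OF _ this] show False
        using card w \<open>w \<noteq> 1\<close> by (auto split: if_splits)
    qed
  next
    assume coprime: "coprime q (monom 1 m - 1)"
    have "y \<in> {0, 1}" if "linearized e q y = tr n y" for y :: 'a
    proof (cases "tr n y = 0")
      case True
      then show ?thesis
        using coprime_linearized_root_eq_0[OF coprime assms(2,4)] that by simp
    next
      case False
      then have "linearized e q (y + 1) = 0"
        using that tr_in_01[of y] L_1 by (simp add: linearized_add_right)
      then show ?thesis
        using coprime_linearized_root_eq_0[OF coprime assms(2,4)] add_eq_zero_iff_eq by blast
    qed
    moreover have "0 \<in> ?Y" "1 \<in> ?Y \<longleftrightarrow> odd n"
      using L_1 by (simp_all add: tr_1)
    ultimately have "?Y = (if even n then {0} else {0, 1})"
      by auto
    then show "card ?Y = (if even n then 1 else 2)"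
      by simp
  qed
qed

lemma p_fun_in_01: "p_fun n (y::'a) \<in> {0, 1}"
proof (cases "even n")
  case True
  define h where "h = n div 2"
  have "(y ^ (1 + 2 ^ h)) ^ 2 ^ h = y ^ (1 + 2 ^ h)"
  proof -
    have "h + h = n"
      using True unfolding h_def by presburger
    then have "(2::nat) ^ h * 2 ^ h = 2 ^ n"
      by (simp flip: power_add)
    then show ?thesis
      by (simp add: power_add power_mult_distrib mult.commute flip: power_mult)
  qed
  then have "tr h (y ^ (1 + 2 ^ h)) \<in> {0, 1}"
    by (rule tr_in_01_subfield)
  then show ?thesis
    using True by (simp add: p_fun_def h_def add_in_01 sum_in_01 tr_in_01 del: insert_iff)
next
  case False
  then show ?thesis
    by (simp add: p_fun_def sum_in_01 tr_in_01 del: insert_iff)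
qed

lemma fQ_in_01: "fQ n e m k \<alpha> \<beta> c (x::'a) \<in> {0, 1}"
  unfolding fQ_def
  by (intro add_in_01 p_fun_in_01 sum_in_01) (simp add: tr_in_01 insertI1 del: insert_iff)

lemma linearized_c_poly_pcompose_monom:
  "linearized e (pcompose (c_poly m c) (monom 1 k)) (y::'a) =
    y + (\<Sum>i\<in>{1..(m - 1) div 2}. of_bit (c i) * (y ^ 2 ^ (e * (k * i)) + y ^ 2 ^ (e * (k * (m - i)))))"
  by (simp add: c_poly_pcompose_monom linearized_add linearized_sum linearized_smult linearized_monom
      del: add_bit_eq_xor mult_bit_eq_and)

lemma has_polar_fQ:
  assumes "n = e * m" "\<alpha> ^ 2 ^ e = \<alpha>" "\<beta> = \<alpha> ^ 2"
  shows "has_polar n (fQ n e m k \<alpha> \<beta> c)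
    (\<lambda>z::'a. \<alpha> * (tr n (\<alpha> * z) + linearized e (pcompose (c_poly m c) (monom 1 k)) (\<alpha> * z)))"
proof -
  let ?I = "{1..(m - 1) div 2}"
  have \<beta>: "\<beta> ^ 2 ^ e = \<beta>"
    using assms(2,3) by (metis power_mult_distrib power2_eq_square)
  have fQ: "fQ n e m k \<alpha> \<beta> c = (\<lambda>x. p_fun n (\<alpha> * x)
      + (\<Sum>i\<in>?I. of_bit (c i) * tr n (\<beta> * x ^ (1 + 2 ^ (e * (k * i))))))"
    by (simp add: fun_eq_iff fQ_def of_bit_def mult.assoc)
  have L: "(\<lambda>z. \<alpha> * (tr n (\<alpha> * z) + linearized e (pcompose (c_poly m c) (monom 1 k)) (\<alpha> * z)))
      = (\<lambda>z. \<alpha> * (tr n (\<alpha> * z) + \<alpha> * z)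
          + (\<Sum>i\<in>?I. of_bit (c i) * (\<beta> * (z ^ 2 ^ (e * (k * i)) + z ^ 2 ^ (e * (k * (m - i)))))))"
  proof -
    have \<alpha>z: "(\<alpha> * z) ^ 2 ^ (e * t) = \<alpha> * z ^ 2 ^ (e * t)" for z t
      using power_2_power_mult_eq_self[OF assms(2)] by (simp add: power_mult_distrib)
    show ?thesis
      unfolding linearized_c_poly_pcompose_monom \<alpha>z
      by (simp add: fun_eq_iff assms(3) distrib_left sum_distrib_left power2_eq_square ac_simps)
  qed
  have "has_polar n (\<lambda>x. tr n (\<beta> * x ^ (1 + 2 ^ (e * (k * i)))))
      (\<lambda>z. \<beta> * (z ^ 2 ^ (e * (k * i)) + z ^ 2 ^ (e * (k * (m - i)))))" if "i \<in> ?I" for i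
  proof (rule has_polar_tr_power)
    have "i \<le> m"
      using that by auto
    then have "e * (k * i) + e * (k * (m - i)) = e * (k * (i + (m - i)))"
      by (simp only: add_mult_distrib2)
    then show "e * (k * i) + e * (k * (m - i)) = n * k"
      using \<open>i \<le> m\<close> assms(1) by simp
    show "\<beta> ^ 2 ^ (e * (k * (m - i))) = \<beta>"
      using \<beta> by (rule power_2_power_mult_eq_self)
  qed
  then show ?thesis
    unfolding fQ L
    by (intro has_polar_add has_polar_comp_mult[OF has_polar_p_fun] has_polar_sum has_polar_of_bit_mult)
qed

end

theorem theorem4:
  fixes \<alpha> \<beta> :: "'a::{field,finite}" and n e m k :: nat and c :: "nat \<Rightarrow> bit"
  assumes card: "card (UNIV :: 'a set) = 2 ^ n"
    and nem: "n = e * m" and e: "e \<ge> 1" and m: "m \<ge> 1" and k: "k \<ge> 1"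
    and alpha_sub: "\<alpha> ^ (2 ^ e) = \<alpha>" and alpha_nz: "\<alpha> \<noteq> 0"
    and beta: "\<beta> = \<alpha> ^ 2"
  shows "(if even n then bent n (fQ n e m k \<alpha> \<beta> c) else semi_bent n (fQ n e m k \<alpha> \<beta> c))
     \<longleftrightarrow> coprime (pcompose (c_poly m c) (monom 1 k)) (monom 1 m - 1)"
proof -
  let ?G = "linearized e (pcompose (c_poly m c) (monom 1 k)) :: 'a \<Rightarrow> 'a"
  define L where "L z = \<alpha> * (tr n (\<alpha> * z) + ?G (\<alpha> * z))" for z
  have f_01: "\<And>x. fQ n e m k \<alpha> \<beta> c x \<in> {0, 1}"
    by (rule fQ_in_01[OF card])
  have polar: "has_polar n (fQ n e m k \<alpha> \<beta> c) L"
    unfolding L_def by (rule has_polar_fQ[OF card nem alpha_sub beta])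
  have kernel: "{z. L z = 0} = (\<lambda>z. \<alpha> * z) -` {y. ?G y = tr n y}"
    using alpha_nz by (simp add: L_def add_eq_zero_iff_eq[OF card] set_eq_iff eq_commute[of "tr n _"])
  have "surj (\<lambda>z. \<alpha> * z)"
    using alpha_nz by (intro surjI[of _ "\<lambda>y. y / \<alpha>"]) simp
  then have "card {z. L z = 0} = card {y. ?G y = tr n y}"
    unfolding kernel using alpha_nz by (intro card_vimage_inj) auto
  then have "card {z. L z = 0} = (if even n then 1 else 2)
      \<longleftrightarrow> coprime (pcompose (c_poly m c) (monom 1 k)) (monom 1 m - 1)"
    using card_linearized_eq_tr_iff_coprime[OF card poly_c_poly_pcompose_1 nem[symmetric] e m] by simp
  then show ?thesis
    using bent_iff_card_kernel[OF card f_01 polar] semi_bent_iff_card_kernel[OF card f_01 polar] by auto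
qed

end
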